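(* Let $\tilde\beta$ be a minimizer over $b\in\mathbb R^q$ of $G(b;\lambda_2)=\frac1{2n}\|y-Xb\|^2+\frac12\lambda_2b'Lb$, where $\lambda_2\ge0$, and let $\tilde r=y-X\tilde\beta$. Then (i) $\lambda_2\max_{1\le j\le q}|d_j\tilde\beta_j-a_j'\tilde\beta|\le\|\tilde r\|\le\|y\|$ (equivalently, when all $d_j>0$, $\lambda_2\max_j d_j|\tilde\beta_j-a_j'\tilde\beta/d_j|\le\|\tilde r\|\le\|y\|$); (ii) for all $1\le j,k\le q$, $\lambda_2\,|d_j\tilde\beta_j-a_j'\tilde\beta-(d_k\tilde\beta_k-a_k'\tilde\beta)|\le\frac1n\|x_j-x_k\|\,\|y\|$.
   Context: $y\in\mathbb R^n$, $X=(x_1,\dots,x_q)\in\mathbb R^{n\times q}$ with $\|x_j\|^2=n$ for all $j$. $A=(a_{jk})$ is a symmetric $q\times q$ real matrix with zero diagonal, $a_j$ denotes its $j$th row (as a column vector), $d_j=\sum_k|a_{jk}|$, $L=\operatorname{diag}(d_1,\dots,d_q)-A$, so that $b'Lb=\sum_{j<k}|a_{jk}|(b_j-\operatorname{sgn}(a_{jk})b_k)^2$ and $(Lb)_j=d_jb_j-a_j'b$. *)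

theory Defs
  imports "HOL-Analysis.Analysis"
begin

definition degvec :: "real^'q^'q \<Rightarrow> real^'q" where
  "degvec A = (\<chi> j. \<Sum>k\<in>UNIV. \<bar>A $ j $ k\<bar>)"

definition laplacian :: "real^'q^'q \<Rightarrow> real^'q^'q" where
  "laplacian A = (\<chi> j k. (if j = k then degvec A $ j else 0) - A $ j $ k)"

definition Gobj :: "real^'n \<Rightarrow> real^'q^'n \<Rightarrow> real^'q^'q \<Rightarrow> real \<Rightarrow> real^'q \<Rightarrow> real" where
  "Gobj y X A lam2 b =
     (1 / (2 * real CARD('n))) * (norm (y - X *v b))\<^sup>2 + (1/2) * lam2 * (b \<bullet> (laplacian A *v b))"

end

theory Submission
  imports Defs
begin

text \<open>
  Proof idea. Write L for the signed Laplacian, r = y - X beta for the residual and n for the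
  number of observations. The quantity d_j beta_j - a_j'beta is the j-th component of L beta.

  (1) L is symmetric and positive semidefinite, since b'Lb is a weighted sum of squares.
  (2) Along every line beta + t v the objective G is a quadratic polynomial in t whose linear
      coefficient is lam2 v'L beta - r'Xv / n. At a minimiser this coefficient must vanish,
      which gives the stationarity equations lam2 (L beta)_j = r'x_j / n.
  (3) Comparing G(beta) with G(0) and using b'Lb >= 0 yields ||r|| <= ||y||.
  (4) Cauchy-Schwarz with ||x_j|| = sqrt n <= n turns the stationarity equations into part (i);
      subtracting the equations for j and k and applying Cauchy-Schwarz together with (3)
      gives part (ii).
\<close>

lemma nonneg_quadratic_linear_coeff_zero:
  fixes a c :: real
  assumes nonneg: "\<And>t. 0 \<le> t * a + t\<^sup>2 * c"
  shows "a = 0"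
proof (cases "c \<le> 0")
  case True
  have "0 \<le> (-a) * a + (-a)\<^sup>2 * c" by (rule nonneg)
  moreover have "(-a)\<^sup>2 * c \<le> 0" using True by (simp add: mult_nonneg_nonpos)
  ultimately have "a\<^sup>2 \<le> 0" by (simp add: power2_eq_square)
  then show ?thesis by simp
next
  case False
  then have c: "c > 0" by simp
  have "0 \<le> (-a / (2*c)) * a + (-a / (2*c))\<^sup>2 * c" by (rule nonneg)
  also have "\<dots> = - (a\<^sup>2 / (4*c))" using c by (simp add: field_simps power2_eq_square)
  finally have "a\<^sup>2 / (4*c) \<le> 0" by simp
  then have "a\<^sup>2 \<le> 0" using c by (simp add: divide_le_0_iff)
  then show ?thesis by simp
qed

lemma laplacian_mult_component:
  "(laplacian A *v b) $ j = degvec A $ j * b $ j - A $ j \<bullet> b"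
proof -
  have "(laplacian A *v b) $ j
      = (\<Sum>k\<in>UNIV. (if j = k then degvec A $ j * b $ k else 0) - A $ j $ k * b $ k)"
    unfolding laplacian_def matrix_vector_mult_def
    by (auto intro!: sum.cong simp: algebra_simps)
  also have "\<dots> = degvec A $ j * b $ j - A $ j \<bullet> b"
    unfolding inner_vec_def by (simp add: sum_subtractf)
  finally show ?thesis .
qed

text \<open>A symmetric matrix has symmetric entries, and then so does its Laplacian; symmetry of L
  is what makes the cross term of the penalty along a line equal to 2 t v'L beta.\<close>
lemma symmetric_matrix_entries:
  assumes "transpose A = A"
  shows "A $ j $ k = A $ k $ j"
  using assms by (metis transpose_def vec_lambda_beta)

lemma laplacian_symmetric:
  fixes A :: "real^'q^'q"
  assumes "transpose A = A"
  shows "transpose (laplacian A) = laplacian A"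
  unfolding transpose_def laplacian_def
  by (simp add: vec_eq_iff symmetric_matrix_entries[OF assms])

text \<open>Positive semidefiniteness of L: pairing the (j,k) and (k,j) terms of b'Lb gives
  |a_jk| (b_j^2 + b_k^2) - 2 a_jk b_j b_k, which is nonnegative since 2|b_j b_k| <= b_j^2 + b_k^2.\<close>
lemma laplacian_quadratic_form_nonneg:
  fixes A :: "real^'q^'q"
  assumes "transpose A = A"
  shows "0 \<le> b \<bullet> (laplacian A *v b)"
proof -
  define f where "f j k = \<bar>A$j$k\<bar> * (b$j)\<^sup>2 - A$j$k * b$j * b$k" for j k
  have form: "b \<bullet> (laplacian A *v b) = (\<Sum>j\<in>UNIV. \<Sum>k\<in>UNIV. f j k)"
    unfolding inner_vec_def laplacian_mult_component degvec_def f_def inner_vec_def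
    by (simp add: sum_distrib_left sum_distrib_right sum_subtractf right_diff_distrib
        power2_eq_square mult.assoc mult.left_commute mult.commute)
  have pair_nonneg: "0 \<le> f j k + f k j" for j k
  proof -
    have "f j k + f k j = \<bar>A$j$k\<bar> * ((b$j)\<^sup>2 + (b$k)\<^sup>2) - 2 * A$j$k * b$j * b$k"
      unfolding f_def using symmetric_matrix_entries[OF assms, of k j]
      by (simp add: algebra_simps)
    moreover have "2 * A$j$k * b$j * b$k \<le> \<bar>A$j$k\<bar> * (2 * \<bar>b$j * b$k\<bar>)"
    proof -
      have "2 * A$j$k * b$j * b$k \<le> \<bar>2 * A$j$k * b$j * b$k\<bar>" by (rule abs_ge_self)
      also have "\<dots> = \<bar>A$j$k\<bar> * (2 * \<bar>b$j * b$k\<bar>)" by (simp add: abs_mult)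
      finally show ?thesis .
    qed
    moreover have "\<bar>A$j$k\<bar> * (2 * \<bar>b$j * b$k\<bar>) \<le> \<bar>A$j$k\<bar> * ((b$j)\<^sup>2 + (b$k)\<^sup>2)"
      using sum_squares_bound[of "\<bar>b$j\<bar>" "\<bar>b$k\<bar>"]
      by (intro mult_left_mono) (simp_all add: abs_mult mult.assoc)
    ultimately show ?thesis by linarith
  qed
  have "2 * (b \<bullet> (laplacian A *v b)) = (\<Sum>j\<in>UNIV. \<Sum>k\<in>UNIV. f j k + f k j)"
    using form sum.swap[of f UNIV UNIV] by (simp add: sum.distrib)
  also have "\<dots> \<ge> 0" by (intro sum_nonneg pair_nonneg)
  finally show ?thesis by simp
qed

lemma Gobj_along_line:
  fixes y :: "real^'n" and X :: "real^'q^'n" and A :: "real^'q^'q" and beta :: "real^'q"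
  assumes A_sym: "transpose A = A"
  defines "L \<equiv> laplacian A" and "n \<equiv> real CARD('n)" and "r \<equiv> y - X *v beta"
  shows "Gobj y X A lam2 (beta + t *\<^sub>R v)
       = Gobj y X A lam2 beta
         + t * (lam2 * (v \<bullet> (L *v beta)) - (1/n) * (r \<bullet> (X *v v)))
         + t\<^sup>2 * ((1/(2*n)) * ((X *v v) \<bullet> (X *v v)) + (1/2) * lam2 * (v \<bullet> (L *v v)))"
proof -
  have L_sym: "u \<bullet> (L *v w) = w \<bullet> (L *v u)" for u w
    unfolding L_def
    by (metis laplacian_symmetric[OF A_sym] dot_lmul_matrix inner_commute vector_transpose_matrix)
  have residual: "y - X *v (beta + t *\<^sub>R v) = r - t *\<^sub>R (X *v v)"
    unfolding r_def by (simp add: algebra_simps)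
  have penalty: "(beta + t *\<^sub>R v) \<bullet> (L *v (beta + t *\<^sub>R v))
      = beta \<bullet> (L *v beta) + 2 * t * (v \<bullet> (L *v beta)) + t\<^sup>2 * (v \<bullet> (L *v v))"
    using L_sym[of beta v]
    by (simp add: algebra_simps inner_add_left inner_add_right power2_eq_square)
  have fit: "(norm (r - t *\<^sub>R (X *v v)))\<^sup>2
      = (norm r)\<^sup>2 - 2 * t * (r \<bullet> (X *v v)) + t\<^sup>2 * ((X *v v) \<bullet> (X *v v))"
    unfolding power2_norm_eq_inner
    by (simp add: inner_diff_left inner_diff_right inner_commute power2_eq_square algebra_simps)
  have G_line: "Gobj y X A lam2 (beta + t *\<^sub>R v)
      = (1/(2*n)) * ((norm r)\<^sup>2 - 2 * t * (r \<bullet> (X *v v)) + t\<^sup>2 * ((X *v v) \<bullet> (X *v v)))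
        + (1/2) * lam2 * (beta \<bullet> (L *v beta) + 2 * t * (v \<bullet> (L *v beta)) + t\<^sup>2 * (v \<bullet> (L *v v)))"
    using penalty fit unfolding Gobj_def residual L_def n_def by simp
  have G_beta: "Gobj y X A lam2 beta = (1/(2*n)) * (norm r)\<^sup>2 + (1/2) * lam2 * (beta \<bullet> (L *v beta))"
    unfolding Gobj_def L_def n_def r_def ..
  have "n > 0" unfolding n_def by simp
  then show ?thesis
    unfolding G_line G_beta by (simp add: field_simps power2_eq_square)
qed

lemma minimiser_stationarity:
  fixes y :: "real^'n" and X :: "real^'q^'n" and A :: "real^'q^'q"
  assumes "transpose A = A"
    and minim: "\<And>b. Gobj y X A lam2 beta \<le> Gobj y X A lam2 b"
  shows "lam2 * (laplacian A *v beta) $ j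
       = (1 / real CARD('n)) * ((y - X *v beta) \<bullet> column j X)"
proof -
  define v :: "real^'q" where "v = axis j 1"
  define a where "a = lam2 * (v \<bullet> (laplacian A *v beta))
                      - (1 / real CARD('n)) * ((y - X *v beta) \<bullet> (X *v v))"
  have "a = 0"
  proof (rule nonneg_quadratic_linear_coeff_zero)
    fix t :: real
    show "0 \<le> t * a + t\<^sup>2 * ((1/(2 * real CARD('n))) * ((X *v v) \<bullet> (X *v v))
                          + (1/2) * lam2 * (v \<bullet> (laplacian A *v v)))"
      using minim[of "beta + t *\<^sub>R v"] Gobj_along_line[OF assms(1), of y X lam2 beta t v]
      unfolding a_def by linarith
  qed
  then show ?thesis
    unfolding a_def v_def by (simp add: inner_axis' matrix_vector_mult_basis)
qed

text \<open>The minimiser fits no worse than b = 0, and the penalty is nonnegative, so ||r|| <= ||y||.\<close>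
lemma minimiser_residual_le:
  fixes y :: "real^'n" and X :: "real^'q^'n" and A :: "real^'q^'q"
  assumes "transpose A = A" and "lam2 \<ge> 0"
    and minim: "\<And>b. Gobj y X A lam2 beta \<le> Gobj y X A lam2 b"
  shows "norm (y - X *v beta) \<le> norm y"
proof -
  define n where "n = real CARD('n)"
  have n_pos: "n > 0" unfolding n_def by simp
  have "Gobj y X A lam2 beta \<le> Gobj y X A lam2 0" by (rule minim)
  then have "(norm (y - X *v beta))\<^sup>2 / (2*n) + (1/2) * lam2 * (beta \<bullet> (laplacian A *v beta))
           \<le> (norm y)\<^sup>2 / (2*n)"
    unfolding Gobj_def n_def by simp
  moreover have "0 \<le> lam2 * (beta \<bullet> (laplacian A *v beta))"
    using assms(2) laplacian_quadratic_form_nonneg[OF assms(1)] by simp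
  ultimately have "(norm (y - X *v beta))\<^sup>2 / (2*n) \<le> (norm y)\<^sup>2 / (2*n)" by linarith
  then have "(norm (y - X *v beta))\<^sup>2 \<le> (norm y)\<^sup>2" using n_pos by (simp add: divide_le_cancel)
  then show ?thesis by (rule power2_le_imp_le) simp
qed

lemma inner_div_sq_norm_le:
  fixes r x :: "'a::real_inner"
  assumes x_sq: "(norm x)\<^sup>2 = n" and n: "n \<ge> 1"
  shows "\<bar>r \<bullet> x\<bar> / n \<le> norm r"
proof -
  have "(1::real)\<^sup>2 \<le> (norm x)\<^sup>2" using x_sq n by simp
  then have "1 \<le> norm x" by (rule power2_le_imp_le) simp
  then have "norm x * 1 \<le> norm x * norm x" by (intro mult_left_mono) simp_all
  then have "norm r * norm x \<le> norm r * n"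
    using x_sq by (intro mult_left_mono) (simp_all add: power2_eq_square)
  then have "\<bar>r \<bullet> x\<bar> \<le> norm r * n" using Cauchy_Schwarz_ineq2[of r x] by linarith
  then show ?thesis using n by (simp add: divide_le_eq)
qed

lemma minimiser_gradient_bound:
  fixes y :: "real^'n" and X :: "real^'q^'n" and A :: "real^'q^'q"
  assumes "transpose A = A" and lam2: "lam2 \<ge> 0"
    and minim: "\<And>b. Gobj y X A lam2 beta \<le> Gobj y X A lam2 b"
    and col_sq: "(norm (column j X))\<^sup>2 = real CARD('n)"
  shows "lam2 * \<bar>(laplacian A *v beta) $ j\<bar> \<le> norm (y - X *v beta)"
proof -
  define n where "n = real CARD('n)"
  have n: "n \<ge> 1" unfolding n_def by (simp add: Suc_leI)
  have "lam2 * \<bar>(laplacian A *v beta) $ j\<bar> = \<bar>lam2 * (laplacian A *v beta) $ j\<bar>"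
    using lam2 by (simp add: abs_mult)
  also have "\<dots> = \<bar>(y - X *v beta) \<bullet> column j X\<bar> / n"
    using n minimiser_stationarity[OF assms(1) minim] unfolding n_def by (simp add: abs_divide)
  also have "\<dots> \<le> norm (y - X *v beta)"
    using inner_div_sq_norm_le col_sq n unfolding n_def by blast
  finally show ?thesis .
qed

lemma minimiser_gradient_difference_bound:
  fixes y :: "real^'n" and X :: "real^'q^'n" and A :: "real^'q^'q"
  assumes "transpose A = A" and lam2: "lam2 \<ge> 0"
    and minim: "\<And>b. Gobj y X A lam2 beta \<le> Gobj y X A lam2 b"
  shows "lam2 * \<bar>(laplacian A *v beta) $ j - (laplacian A *v beta) $ k\<bar>
       \<le> (1 / real CARD('n)) * norm (column j X - column k X) * norm y"
proof -
  define n where "n = real CARD('n)"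
  define r where "r = y - X *v beta"
  define g where "g i = (laplacian A *v beta) $ i" for i
  have n: "n \<ge> 1" unfolding n_def by (simp add: Suc_leI)
  have stat: "lam2 * g i = (r \<bullet> column i X) / n" for i
    using minimiser_stationarity[OF assms(1) minim] unfolding g_def r_def n_def by simp
  have "lam2 * \<bar>g j - g k\<bar> = \<bar>lam2 * g j - lam2 * g k\<bar>"
    using lam2 by (simp add: abs_mult right_diff_distrib[symmetric])
  also have "\<dots> = \<bar>r \<bullet> (column j X - column k X)\<bar> / n"
    using n unfolding stat by (simp add: inner_diff_right diff_divide_distrib[symmetric] abs_divide)
  also have "\<dots> \<le> norm (column j X - column k X) * norm r / n"
    using Cauchy_Schwarz_ineq2[of r "column j X - column k X"] n
    by (intro divide_right_mono) (simp_all add: mult.commute)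
  also have "\<dots> \<le> norm (column j X - column k X) * norm y / n"
    using minimiser_residual_le[OF assms] n unfolding r_def
    by (intro divide_right_mono mult_left_mono) auto
  finally show ?thesis unfolding g_def n_def by simp
qed

theorem proposition1:
  fixes y :: "real^'n" and X :: "real^'q^'n" and A :: "real^'q^'q"
    and lam2 :: real and beta :: "real^'q"
  assumes Xnorm: "\<forall>j. (norm (column j X))\<^sup>2 = real CARD('n)"
    and Asym: "transpose A = A"
    and Adiag: "\<forall>j. A $ j $ j = 0"
    and lam2: "lam2 \<ge> 0"
    and minim: "\<forall>b. Gobj y X A lam2 beta \<le> Gobj y X A lam2 b"
  shows "lam2 * Max ((\<lambda>j. \<bar>degvec A $ j * beta $ j - (A $ j) \<bullet> beta\<bar>) ` UNIV)
           \<le> norm (y - X *v beta)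
       \<and> norm (y - X *v beta) \<le> norm y
       \<and> (\<forall>j k. lam2 * \<bar>degvec A $ j * beta $ j - (A $ j) \<bullet> beta
                       - (degvec A $ k * beta $ k - (A $ k) \<bullet> beta)\<bar>
                 \<le> (1 / real CARD('n)) * norm (column j X - column k X) * norm y)"
proof -
  have minim': "\<And>b. Gobj y X A lam2 beta \<le> Gobj y X A lam2 b" using minim by blast
  define g where "g j = (laplacian A *v beta) $ j" for j
  have "Max ((\<lambda>j. \<bar>g j\<bar>) ` UNIV) \<in> (\<lambda>j. \<bar>g j\<bar>) ` UNIV" by (rule Max_in) auto
  then obtain i where "Max ((\<lambda>j. \<bar>g j\<bar>) ` UNIV) = \<bar>g i\<bar>" by blast
  then have "lam2 * Max ((\<lambda>j. \<bar>g j\<bar>) ` UNIV) \<le> norm (y - X *v beta)"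
    using minimiser_gradient_bound[OF Asym lam2 minim'] Xnorm unfolding g_def by simp
  then show ?thesis
    using minimiser_residual_le[OF Asym lam2 minim']
      minimiser_gradient_difference_bound[OF Asym lam2 minim']
    unfolding g_def laplacian_mult_component by blast
qed

end
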